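(* Let $\mathcal H$ be a hypothesis class over $\mathcal X$ and let $R\subseteq\mathcal X$ be a set of size $n$ that is shattered by $\mathcal H$. There exist two functions $F_a,F_b$ mapping $n$-bit strings to samples of labelled examples with points from $R$ such that for every $x,y\in\{0,1\}^n$, $x\cap y=\emptyset$ (identifying bit strings with subsets of $[n]$) if and only if the joint sample $S=(F_a(x),F_b(y))$ is realizable by $\mathcal H|_R$.
   Context: A sample is a finite sequence of examples $(x,y)\in\mathcal X\times\{\pm1\}$; $(S_1,S_2)$ denotes concatenation. $\mathcal H|_R=\{h|_R:h\in\mathcal H\}$. A sample is realizable by a class if some member of the class agrees with all its examples. *)

theory Defs
  imports Main "HOL-Library.FuncSet"
begin

definition labels :: "int set" where "labels = {-1, 1}"

definition shatters :: "('x \<Rightarrow> int) set \<Rightarrow> 'x set \<Rightarrow> bool" where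
  "shatters H R \<longleftrightarrow> (\<forall>f. (\<forall>x\<in>R. f x \<in> labels) \<longrightarrow> (\<exists>h\<in>H. \<forall>x\<in>R. h x = f x))"

definition restrict_class :: "('x \<Rightarrow> int) set \<Rightarrow> 'x set \<Rightarrow> ('x \<Rightarrow> int) set" where
  "restrict_class H R = (\<lambda>h. restrict h R) ` H"

definition realizable :: "('x \<Rightarrow> int) set \<Rightarrow> ('x \<times> int) list \<Rightarrow> bool" where
  "realizable C S \<longleftrightarrow> (\<exists>h\<in>C. \<forall>(x, y)\<in>set S. h x = y)"

end

theory Submission
  imports Defs
begin

text \<open>Enumerate R as r_0, ..., r_{n-1}. Alice labels r_i positively for every bit x_i set, Bob labels
  r_i negatively for every bit y_i set. The joint sample is consistent (no point carries both labels)
  exactly when x and y are disjoint, and since R is shattered every consistent sample over R with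
  labels in {-1,1} is realized by H restricted to R.\<close>

definition consistent :: "('x \<times> int) list \<Rightarrow> bool" where
  "consistent S \<longleftrightarrow> (\<forall>a b c. (a, b) \<in> set S \<longrightarrow> (a, c) \<in> set S \<longrightarrow> b = c)"

lemma realizable_imp_consistent: "realizable C S \<Longrightarrow> consistent S"
  unfolding realizable_def consistent_def by (metis (mono_tags, lifting) case_prodD)

lemma shatters_consistent_imp_realizable:
  assumes "shatters H R" and "set S \<subseteq> R \<times> labels" and "consistent S"
  shows "realizable (restrict_class H R) S"
proof -
  define f where "f = (\<lambda>z. if (z, 1) \<in> set S then 1 else (-1::int))"
  have "\<forall>z\<in>R. f z \<in> labels" by (simp add: f_def labels_def)
  then obtain h where h: "h \<in> H" "\<forall>z\<in>R. h z = f z"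
    using assms(1) unfolding shatters_def by blast
  have "restrict h R a = b" if "(a, b) \<in> set S" for a b
  proof -
    have "a \<in> R" "b = 1 \<or> b = -1" using that assms(2) by (auto simp: labels_def)
    then show ?thesis
      using that h(2) assms(3) by (auto simp: f_def consistent_def)
  qed
  moreover have "restrict h R \<in> restrict_class H R" using h(1) by (simp add: restrict_class_def)
  ultimately show ?thesis unfolding realizable_def by blast
qed

corollary shatters_realizable_iff_consistent:
  assumes "shatters H R" and "set S \<subseteq> R \<times> labels"
  shows "realizable (restrict_class H R) S \<longleftrightarrow> consistent S"
  using assms realizable_imp_consistent shatters_consistent_imp_realizable by blast

definition indicator_sample :: "'x list \<Rightarrow> int \<Rightarrow> bool list \<Rightarrow> ('x \<times> int) list" where
  "indicator_sample rs c x = [(rs ! i, c). i \<leftarrow> [0..<length rs], x ! i]"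

lemma set_indicator_sample:
  "set (indicator_sample rs c x) = {(rs ! i, c) | i. i < length rs \<and> x ! i}"
  by (auto simp: indicator_sample_def)

lemma consistent_indicator_samples_iff_disjoint:
  assumes "distinct rs"
  shows "consistent (indicator_sample rs 1 x @ indicator_sample rs (-1) y)
           \<longleftrightarrow> (\<forall>i<length rs. \<not> (x ! i \<and> y ! i))"
proof -
  have index_eq: "i = j" if "i < length rs" "j < length rs" "rs ! i = rs ! j" for i j
    using that assms nth_eq_iff_index_eq by blast
  let ?S = "indicator_sample rs 1 x @ indicator_sample rs (-1) y"
  have pos: "(a, 1) \<in> set ?S \<longleftrightarrow> (\<exists>i<length rs. a = rs ! i \<and> x ! i)"
    and neg: "(a, -1) \<in> set ?S \<longleftrightarrow> (\<exists>i<length rs. a = rs ! i \<and> y ! i)"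
    and labels: "(a, b) \<in> set ?S \<Longrightarrow> b = 1 \<or> b = -1" for a b
    unfolding set_append set_indicator_sample by auto
  show ?thesis
  proof
    assume consistent: "consistent ?S"
    show "\<forall>i<length rs. \<not> (x ! i \<and> y ! i)"
    proof (intro allI impI notI)
      fix i assume "i < length rs" "x ! i \<and> y ! i"
      then have "(rs ! i, 1) \<in> set ?S" "(rs ! i, -1) \<in> set ?S" using pos neg by blast+
      then have "(1::int) = -1" using consistent unfolding consistent_def by blast
      then show False by simp
    qed
  next
    assume disjoint: "\<forall>i<length rs. \<not> (x ! i \<and> y ! i)"
    have no_clash: "\<not> ((a, 1) \<in> set ?S \<and> (a, -1) \<in> set ?S)" for a
    proof
      assume "(a, 1) \<in> set ?S \<and> (a, -1) \<in> set ?S"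
      then obtain i j where "i < length rs" "j < length rs" "a = rs ! i" "a = rs ! j" "x ! i" "y ! j"
        using pos neg by blast
      moreover from this have "i = j" using index_eq by simp
      ultimately show False using disjoint by simp
    qed
    show "consistent ?S"
      unfolding consistent_def
    proof (intro allI impI)
      fix a b c assume "(a, b) \<in> set ?S" "(a, c) \<in> set ?S"
      moreover from this have "b = 1 \<or> b = -1" "c = 1 \<or> c = -1" using labels by blast+
      ultimately show "b = c" using no_clash[of a] by auto
    qed
  qed
qed

theorem lemma4:
  fixes H :: "('x \<Rightarrow> int) set" and R :: "'x set" and n :: nat
  assumes "\<forall>h\<in>H. \<forall>x. h x \<in> labels"
    and "finite R" and "card R = n"
    and "shatters H R"
  shows "\<exists>Fa Fb :: bool list \<Rightarrow> ('x \<times> int) list.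
           (\<forall>x. length x = n \<longrightarrow> set (Fa x) \<subseteq> R \<times> labels \<and> set (Fb x) \<subseteq> R \<times> labels) \<and>
           (\<forall>x y. length x = n \<longrightarrow> length y = n \<longrightarrow>
              ((\<forall>i<n. \<not> (x ! i \<and> y ! i)) \<longleftrightarrow> realizable (restrict_class H R) (Fa x @ Fb y)))"
proof -
  obtain rs where rs: "set rs = R" "distinct rs" using finite_distinct_list[OF assms(2)] by blast
  have len: "length rs = n" using rs assms(3) distinct_card by fastforce
  have samples_in_R: "set (indicator_sample rs c x) \<subseteq> R \<times> labels" if "c \<in> labels" for c x
    using that rs(1) by (auto simp: set_indicator_sample)
  have labels: "1 \<in> labels" "-1 \<in> labels" by (simp_all add: labels_def)
  show ?thesis
  proof (intro exI conjI allI impI)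
    fix x y :: "bool list"
    show "set (indicator_sample rs 1 x) \<subseteq> R \<times> labels" "set (indicator_sample rs (-1) x) \<subseteq> R \<times> labels"
      using samples_in_R labels by blast+
    have "set (indicator_sample rs 1 x @ indicator_sample rs (-1) y) \<subseteq> R \<times> labels"
      using samples_in_R labels by auto
    then show "(\<forall>i<n. \<not> (x ! i \<and> y ! i))
               \<longleftrightarrow> realizable (restrict_class H R) (indicator_sample rs 1 x @ indicator_sample rs (-1) y)"
      using shatters_realizable_iff_consistent[OF assms(4)]
        consistent_indicator_samples_iff_disjoint[OF rs(2)] len by simp
  qed
qed

end
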